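(* Let $I=[0,1]$ and let $G$ be a group with an injective homomorphism $\rho: G \to \mathrm{Diff}^1_+(I)$ (so $G$ acts on $I$ via $\rho$). Let $H$ be a finitely generated subgroup of $G$ with generating set $S=\{h_1,\dots,h_n\}$. Let $p\in I$ lie in the frontier of $\mathrm{fix}(H)$, and let $(p_m)$ be a sequence of points of $I\setminus \mathrm{fix}(H)$ with $p_m\to p$. Then there exist sequences $k_m\in\{1,\dots,n\}$ and $e_m\in\{+1,-1\}$ such that for every $h\in[H,H]$ there is an $M$ (depending on $h$) with $$h <_{p_m} h_{k_m}^{e_m}\quad\text{for all } m\ge M,$$ i.e. $h(p_m) < h_{k_m}^{e_m}(p_m)$ for all $m \ge M$.
   Context: $\mathrm{Diff}^1_+(I)$ denotes the group of orientation-preserving $C^1$ diffeomorphisms of the closed interval $I=[0,1]$. For a subgroup $H$ acting on $I$, $\mathrm{fix}(H)$ denotes the set of points of $I$ fixed by every element of $H$, and $[H,H]$ is the commutator subgroup of $H$. For a group $G$ acting on $I$ by orientation-preserving homeomorphisms and a point $q\in I$, the relation $<_q$ on $G$ is defined by: $a <_q b$ if and only if $a(q) < b(q)$ in $I$. *)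

theory Defs
  imports "HOL-Analysis.Analysis" "HOL-Algebra.Algebra"
begin

definition C1_on :: "real set \<Rightarrow> (real \<Rightarrow> real) \<Rightarrow> bool" where
  "C1_on S f \<longleftrightarrow> (\<exists>f'. continuous_on S f' \<and>
      (\<forall>x\<in>S. (f has_real_derivative f' x) (at x within S)))"

definition diff1_plus :: "(real \<Rightarrow> real) \<Rightarrow> bool" where
  "diff1_plus f \<longleftrightarrow> bij_betw f {0..1} {0..1} \<and> C1_on {0..1} f
     \<and> C1_on {0..1} (inv_into {0..1} f) \<and> strict_mono_on {0..1} f"

text \<open>The group Diff^1_+(I) under composition; elements are normalised to be the
  identity outside [0,1] so that equality of functions is equality of diffeomorphisms.\<close>
definition Diff1_plus_group :: "(real \<Rightarrow> real) monoid" where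
  "Diff1_plus_group = \<lparr> carrier = {f. diff1_plus f \<and> (\<forall>x. x \<notin> {0..1} \<longrightarrow> f x = x)},
                        mult = (\<lambda>f g. f \<circ> g), one = id \<rparr>"

definition fixset :: "('a \<Rightarrow> real \<Rightarrow> real) \<Rightarrow> 'a set \<Rightarrow> real set" where
  "fixset \<rho> H = {x \<in> {0..1}. \<forall>g\<in>H. \<rho> g x = x}"

end

theory Submission
  imports Defs
begin

text \<open>
  Choose \<open>h\<^sub>k\<^sub>m\<^sup>e\<^sup>m\<close> to move \<open>p\<^sub>m\<close> furthest to the right. Off \<open>fix(H)\<close> this maximal
  displacement is positive and, by the Lipschitz property, dominates the displacements
  \<open>\<phi>\<^sub>k(x) = h\<^sub>k(x) - x\<close> of all generators up to a constant factor. So it suffices that every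
  \<open>g \<in> [H, H]\<close> moves \<open>x\<close> by \<open>o(\<Sum>\<^sub>k |\<phi>\<^sub>k(x)|)\<close> as \<open>x \<rightarrow> p\<close>.

  If some generator has derivative \<open>d \<noteq> 1\<close> at \<open>p\<close>, its displacement is of exact order
  \<open>x - p\<close>, while \<open>g\<close>, having derivative \<open>1\<close> at \<open>p\<close> as a product of commutators, moves \<open>x\<close> by
  \<open>o(x - p)\<close>. Otherwise every \<open>\<phi>\<^sub>k\<close> has strict derivative \<open>0\<close> at \<open>p\<close>, and this makes the
  first-order expansion \<open>h(x) = x + \<Sum>\<^sub>k c\<^sub>k \<phi>\<^sub>k(x) + o(\<Sum>\<^sub>k |\<phi>\<^sub>k(x)|)\<close> stable under
  composition and inversion; the coefficients \<open>c\<^sub>k\<close> are then the exponent sums of \<open>h \<in> H\<close>,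
  which vanish on \<open>[H, H]\<close>.
\<close>

lemma Diff1_plus_group_mult [simp]: "f \<otimes>\<^bsub>Diff1_plus_group\<^esub> g = f \<circ> g"
  by (simp add: Diff1_plus_group_def)

lemma Diff1_plus_group_carrierD:
  assumes "f \<in> carrier Diff1_plus_group"
  shows Diff1_plus_bij: "bij_betw f {0..1} {0..1}"
    and Diff1_plus_C1: "C1_on {0..1} f"
    and Diff1_plus_strict_mono: "strict_mono_on {0..1} f"
    and Diff1_plus_outside: "x \<notin> {0..1} \<Longrightarrow> f x = x"
  using assms by (auto simp: Diff1_plus_group_def diff1_plus_def)

lemma Diff1_plus_maps_interval: "f \<in> carrier Diff1_plus_group \<Longrightarrow> x \<in> {0..1} \<Longrightarrow> f x \<in> {0..1}"
  using Diff1_plus_bij bij_betwE by blast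

lemma Diff1_plus_inj:
  assumes f: "f \<in> carrier Diff1_plus_group"
  shows "inj f"
proof (rule injI)
  fix x y assume "f x = f y"
  with Diff1_plus_bij[OF f] Diff1_plus_outside[OF f] Diff1_plus_maps_interval[OF f]
  show "x = y"
    unfolding bij_betw_def inj_on_def by (metis atLeastAtMost_iff)
qed

lemma C1_on_continuous_on: "C1_on S f \<Longrightarrow> continuous_on S f"
  unfolding C1_on_def
  using DERIV_continuous continuous_on_eq_continuous_within by blast

lemma C1_on_lipschitz:
  assumes "C1_on S f" "convex S" "compact S"
  obtains L where "\<And>x y. x \<in> S \<Longrightarrow> y \<in> S \<Longrightarrow> \<bar>f x - f y\<bar> \<le> L * \<bar>x - y\<bar>"
proof -
  obtain f' where f': "continuous_on S f'" "\<And>x. x \<in> S \<Longrightarrow> (f has_real_derivative f' x) (at x within S)"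
    using assms(1) unfolding C1_on_def by blast
  obtain B where "\<And>x. x \<in> S \<Longrightarrow> norm (f' x) \<le> B"
    using compact_imp_bounded[OF compact_continuous_image[OF f'(1) assms(3)]]
    unfolding bounded_iff by blast
  with field_differentiable_bound[OF assms(2) f'(2)] show ?thesis
    using that[of B] by (metis real_norm_def)
qed

lemma fixed_point_displacement_quotient:
  assumes "(f has_real_derivative d) (at p within S)" "f p = p"
  shows "((\<lambda>x. (f x - x) / (x - p)) \<longlongrightarrow> d - 1) (at p within S)"
proof -
  have "((\<lambda>x. (f x - f p) / (x - p) - 1) \<longlongrightarrow> d - 1) (at p within S)"
    using assms(1) unfolding has_field_derivative_iff by (intro tendsto_diff) auto
  moreover have "\<forall>\<^sub>F x in at p within S. (f x - f p) / (x - p) - 1 = (f x - x) / (x - p)"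
    using assms(2) by (auto simp: eventually_at_filter field_simps)
  ultimately show ?thesis
    using tendsto_cong by fast
qed

section \<open>Functions with vanishing strict derivative\<close>

text \<open>\<open>flat_at F \<phi>\<close>: \<open>\<phi>\<close> has strict derivative \<open>0\<close> along \<open>F\<close>.\<close>

definition flat_at :: "real filter \<Rightarrow> (real \<Rightarrow> real) \<Rightarrow> bool" where
  "flat_at F \<phi> \<longleftrightarrow> (\<forall>\<eta>>0. \<forall>\<^sub>F (x, y) in F \<times>\<^sub>F F. \<bar>\<phi> y - \<phi> x\<bar> \<le> \<eta> * \<bar>y - x\<bar>)"

lemma flat_atD:
  "flat_at F \<phi> \<Longrightarrow> \<eta> > 0 \<Longrightarrow> \<forall>\<^sub>F (x, y) in F \<times>\<^sub>F F. \<bar>\<phi> y - \<phi> x\<bar> \<le> \<eta> * \<bar>y - x\<bar>"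
  by (simp add: flat_at_def)

lemma flat_at_along:
  assumes "flat_at F \<phi>" "filterlim g F F" "\<eta> > 0"
  shows "\<forall>\<^sub>F x in F. \<bar>\<phi> (g x) - \<phi> x\<bar> \<le> \<eta> * \<bar>g x - x\<bar>"
proof -
  have "filterlim (\<lambda>x. (x, g x)) (F \<times>\<^sub>F F) F"
    by (rule filterlim_Pair[OF filterlim_ident assms(2)])
  with flat_atD[OF assms(1,3)] show ?thesis
    unfolding filterlim_iff by fastforce
qed

lemma flat_at_const: "flat_at F (\<lambda>x. c)"
  unfolding flat_at_def by (auto intro: always_eventually)

lemma flat_at_add:
  assumes "flat_at F \<phi>" "flat_at F \<psi>"
  shows "flat_at F (\<lambda>x. \<phi> x + \<psi> x)"
  unfolding flat_at_def
proof (intro allI impI)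
  fix \<eta> :: real assume "\<eta> > 0"
  then have "\<forall>\<^sub>F (x, y) in F \<times>\<^sub>F F. \<bar>\<phi> y - \<phi> x\<bar> \<le> \<eta>/2 * \<bar>y - x\<bar>"
    "\<forall>\<^sub>F (x, y) in F \<times>\<^sub>F F. \<bar>\<psi> y - \<psi> x\<bar> \<le> \<eta>/2 * \<bar>y - x\<bar>"
    by (intro flat_atD[OF assms(1)] flat_atD[OF assms(2)], simp)+
  then show "\<forall>\<^sub>F (x, y) in F \<times>\<^sub>F F. \<bar>\<phi> y + \<psi> y - (\<phi> x + \<psi> x)\<bar> \<le> \<eta> * \<bar>y - x\<bar>"
  proof eventually_elim
    case (elim z)
    obtain x y where z: "z = (x, y)" by fastforce
    have "\<bar>\<phi> y + \<psi> y - (\<phi> x + \<psi> x)\<bar> \<le> \<bar>\<phi> y - \<phi> x\<bar> + \<bar>\<psi> y - \<psi> x\<bar>"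
      by linarith
    with elim show ?case by (simp add: z)
  qed
qed

lemma flat_at_cmult:
  assumes "flat_at F \<phi>"
  shows "flat_at F (\<lambda>x. c * \<phi> x)"
  unfolding flat_at_def
proof (intro allI impI)
  fix \<eta> :: real assume "\<eta> > 0"
  then have "\<forall>\<^sub>F (x, y) in F \<times>\<^sub>F F. \<bar>\<phi> y - \<phi> x\<bar> \<le> \<eta> / (\<bar>c\<bar> + 1) * \<bar>y - x\<bar>"
    using assms by (intro flat_atD) (auto simp: add_pos_nonneg)
  then show "\<forall>\<^sub>F (x, y) in F \<times>\<^sub>F F. \<bar>c * \<phi> y - c * \<phi> x\<bar> \<le> \<eta> * \<bar>y - x\<bar>"
  proof eventually_elim
    case (elim z)
    obtain x y where z: "z = (x, y)" by fastforce
    have "\<bar>c * \<phi> y - c * \<phi> x\<bar> = \<bar>c\<bar> * \<bar>\<phi> y - \<phi> x\<bar>"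
      by (simp add: abs_mult[symmetric] right_diff_distrib)
    also have "\<dots> \<le> (\<bar>c\<bar> + 1) * (\<eta> / (\<bar>c\<bar> + 1) * \<bar>y - x\<bar>)"
      using elim by (intro mult_mono) (auto simp: z)
    also have "\<dots> = \<eta> * \<bar>y - x\<bar>"
      by (simp add: add_pos_nonneg)
    finally show ?case by (simp add: z)
  qed
qed

lemma flat_at_abs: "flat_at F \<phi> \<Longrightarrow> flat_at F (\<lambda>x. \<bar>\<phi> x\<bar>)"
  unfolding flat_at_def
  by (elim all_forward imp_forward eventually_mono) (auto intro: order_trans abs_triangle_ineq3)

lemma flat_at_sum:
  "finite I \<Longrightarrow> (\<And>i. i \<in> I \<Longrightarrow> flat_at F (\<phi> i)) \<Longrightarrow> flat_at F (\<lambda>x. \<Sum>i\<in>I. \<phi> i x)"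
  by (induction I rule: finite_induct) (auto intro: flat_at_const flat_at_add)

lemma flat_at_if_derivative_vanishes:
  assumes "convex S" "p \<in> S" "continuous_on S \<phi>'" "\<phi>' p = 0"
    and \<phi>: "\<And>x. x \<in> S \<Longrightarrow> (\<phi> has_real_derivative \<phi>' x) (at x within S)"
  shows "flat_at (at p within S) \<phi>"
  unfolding flat_at_def
proof (intro allI impI)
  fix \<eta> :: real assume "\<eta> > 0"
  then obtain r where "r > 0" and r: "\<And>x. x \<in> S \<Longrightarrow> dist x p < r \<Longrightarrow> \<bar>\<phi>' x\<bar> < \<eta>"
    using assms(2-4) unfolding continuous_on_iff by (metis dist_real_def diff_zero)
  define T where "T = S \<inter> ball p r"
  have T: "\<bar>\<phi> y - \<phi> x\<bar> \<le> \<eta> * \<bar>y - x\<bar>" if "x \<in> T" "y \<in> T" for x y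
  proof (rule field_differentiable_bound[where f' = \<phi>', simplified])
    show "convex T"
      unfolding T_def by (simp add: assms(1) convex_Int)
    show "(\<phi> has_real_derivative \<phi>' z) (at z within T)" if "z \<in> T" for z
      using \<phi> that DERIV_subset unfolding T_def by blast
    show "\<bar>\<phi>' z\<bar> \<le> \<eta>" if "z \<in> T" for z
      using r that unfolding T_def by (force simp: dist_commute)
  qed (use that in auto)
  have "\<forall>\<^sub>F x in at p within S. x \<in> T"
    unfolding T_def eventually_at using \<open>r > 0\<close> by (auto simp: dist_commute)
  then show "\<forall>\<^sub>F (x, y) in (at p within S) \<times>\<^sub>F (at p within S). \<bar>\<phi> y - \<phi> x\<bar> \<le> \<eta> * \<bar>y - x\<bar>"
    unfolding eventually_prod_same using T by blast
qed

section \<open>First-order expansions along a flat family\<close>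

locale flat_family =
  fixes F :: "real filter" and I :: "'i set" and \<phi> :: "'i \<Rightarrow> real \<Rightarrow> real"
  assumes finite_index: "finite I" and flat: "\<And>i. i \<in> I \<Longrightarrow> flat_at F (\<phi> i)"
begin

definition lin :: "('i \<Rightarrow> real) \<Rightarrow> real \<Rightarrow> real" where
  "lin c x = (\<Sum>i\<in>I. c i * \<phi> i x)"

definition magnitude :: "real \<Rightarrow> real" where
  "magnitude x = (\<Sum>i\<in>I. \<bar>\<phi> i x\<bar>)"

definition expands :: "('i \<Rightarrow> real) \<Rightarrow> (real \<Rightarrow> real) \<Rightarrow> bool" where
  "expands c f \<longleftrightarrow> (\<forall>\<epsilon>>0. \<forall>\<^sub>F x in F. \<bar>f x - x - lin c x\<bar> \<le> \<epsilon> * magnitude x)"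

lemma magnitude_nonneg: "0 \<le> magnitude x"
  unfolding magnitude_def by (simp add: sum_nonneg)

lemma abs_le_magnitude: "i \<in> I \<Longrightarrow> \<bar>\<phi> i x\<bar> \<le> magnitude x"
  unfolding magnitude_def by (rule member_le_sum) (auto simp: finite_index)

lemma abs_lin_le: "\<bar>lin c x\<bar> \<le> (\<Sum>i\<in>I. \<bar>c i\<bar>) * magnitude x"
proof -
  have "\<bar>lin c x\<bar> \<le> (\<Sum>i\<in>I. \<bar>c i\<bar> * \<bar>\<phi> i x\<bar>)"
    unfolding lin_def abs_mult[symmetric] by (rule sum_abs)
  also have "\<dots> \<le> (\<Sum>i\<in>I. \<bar>c i\<bar> * magnitude x)"
    by (intro sum_mono mult_left_mono abs_le_magnitude) auto
  finally show ?thesis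
    by (simp add: sum_distrib_right)
qed

lemma lin_add: "lin (\<lambda>i. c i + d i) x = lin c x + lin d x"
  unfolding lin_def by (simp add: distrib_right sum.distrib)

lemma lin_zero: "lin (\<lambda>_. 0) x = 0"
  unfolding lin_def by simp

lemma lin_uminus: "lin (\<lambda>i. - c i) x = - lin c x"
  unfolding lin_def by (simp add: sum_negf)

lemma flat_at_lin: "flat_at F (lin c)"
  unfolding lin_def[abs_def] by (intro flat_at_sum flat_at_cmult flat finite_index)

lemma flat_at_magnitude: "flat_at F magnitude"
  unfolding magnitude_def[abs_def] by (intro flat_at_sum flat_at_abs flat finite_index)

lemma expandsD: "expands c f \<Longrightarrow> \<epsilon> > 0 \<Longrightarrow> \<forall>\<^sub>F x in F. \<bar>f x - x - lin c x\<bar> \<le> \<epsilon> * magnitude x"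
  unfolding expands_def by blast

lemma expands_along:
  assumes "expands c f" "filterlim g F F" "\<epsilon> > 0"
  shows "\<forall>\<^sub>F x in F. \<bar>f (g x) - g x - lin c (g x)\<bar> \<le> \<epsilon> * magnitude (g x)"
  using expandsD[OF assms(1,3)] assms(2) unfolding filterlim_iff by blast

lemma expands_id: "expands (\<lambda>_. 0) id"
  unfolding expands_def lin_zero by (auto intro: always_eventually simp: magnitude_nonneg)

lemma expands_basis:
  assumes "i \<in> I" "\<And>x. f x = x + \<phi> i x"
  shows "expands (\<lambda>j. if j = i then 1 else 0) f"
proof -
  have "lin (\<lambda>j. if j = i then 1 else 0) x = (\<Sum>j\<in>I. if j = i then \<phi> j x else 0)" for x
    unfolding lin_def by (rule sum.cong) auto
  then have "lin (\<lambda>j. if j = i then 1 else 0) x = \<phi> i x" for x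
    using assms(1) finite_index by simp
  then show ?thesis
    unfolding expands_def using assms(2) by (auto intro: always_eventually simp: magnitude_nonneg)
qed

lemma magnitude_along:
  assumes "filterlim g F F" "A > 0"
    and "\<forall>\<^sub>F x in F. \<bar>g x - x\<bar> \<le> A * (magnitude x + magnitude (g x))"
  shows "\<forall>\<^sub>F x in F. magnitude (g x) \<le> 2 * magnitude x \<and> \<bar>g x - x\<bar> \<le> 3 * A * magnitude x"
proof -
  have "1 / (3 * A) > 0"
    using assms(2) by simp
  from assms(3) flat_at_along[OF flat_at_magnitude assms(1) this]
  show ?thesis
  proof eventually_elim
    case (elim x)
    define s s' D where "s = magnitude x" and "s' = magnitude (g x)" and "D = \<bar>g x - x\<bar>"
    have "\<bar>s' - s\<bar> \<le> 1 / (3 * A) * D"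
      using elim(2) by (simp add: s_def s'_def D_def)
    also have "\<dots> \<le> 1 / (3 * A) * (A * (s + s'))"
      using elim(1) assms(2) by (intro mult_left_mono) (simp_all add: s_def s'_def D_def)
    also have "\<dots> = (s + s') / 3"
      using assms(2) by simp
    finally have "s' \<le> 2 * s"
      using abs_le_D1 by fastforce
    moreover have "D \<le> A * (s + s')"
      using elim(1) by (simp add: s_def s'_def D_def)
    moreover have "A * (s + s') \<le> A * (3 * s)"
      using \<open>s' \<le> 2 * s\<close> assms(2) by (intro mult_left_mono) auto
    ultimately show ?case
      by (simp add: s_def s'_def D_def)
  qed
qed

lemma expands_comp:
  assumes f: "expands c f" and g: "expands d g" and lim: "filterlim g F F"
  shows "expands (\<lambda>i. c i + d i) (f \<circ> g)"
  unfolding expands_def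
proof (intro allI impI)
  fix \<epsilon> :: real assume "\<epsilon> > 0"
  define A where "A = (\<Sum>i\<in>I. \<bar>d i\<bar>) + 1"
  have "A > 0"
    unfolding A_def by (simp add: add_nonneg_pos sum_nonneg)
  have disp: "\<forall>\<^sub>F x in F. \<bar>g x - x\<bar> \<le> A * (magnitude x + magnitude (g x))"
    using expandsD[OF g zero_less_one]
  proof eventually_elim
    case (elim x)
    then have "\<bar>g x - x\<bar> \<le> A * magnitude x"
      using abs_lin_le[of d x] by (simp add: A_def distrib_right)
    also have "\<dots> \<le> A * (magnitude x + magnitude (g x))"
      using \<open>A > 0\<close> by (simp add: magnitude_nonneg)
    finally show ?case .
  qed
  have pos: "\<epsilon> / 6 > 0" "\<epsilon> / (9 * A) > 0" "\<epsilon> / 3 > 0"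
    using \<open>\<epsilon> > 0\<close> \<open>A > 0\<close> by simp_all
  from magnitude_along[OF lim \<open>A > 0\<close> disp] expands_along[OF f lim pos(1)]
    flat_at_along[OF flat_at_lin[of c] lim pos(2)] expandsD[OF g pos(3)]
  show "\<forall>\<^sub>F x in F. \<bar>(f \<circ> g) x - x - lin (\<lambda>i. c i + d i) x\<bar> \<le> \<epsilon> * magnitude x"
  proof eventually_elim
    case (elim x)
    have "\<bar>f (g x) - g x - lin c (g x)\<bar> \<le> \<epsilon> / 6 * magnitude (g x)"
      using elim(2) by simp
    also have "\<dots> \<le> \<epsilon> / 6 * (2 * magnitude x)"
      using elim(1) \<open>\<epsilon> > 0\<close> by (intro mult_left_mono) auto
    finally have T1: "\<bar>f (g x) - g x - lin c (g x)\<bar> \<le> \<epsilon> / 3 * magnitude x"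
      by simp
    have "\<bar>lin c (g x) - lin c x\<bar> \<le> \<epsilon> / (9 * A) * \<bar>g x - x\<bar>"
      using elim(3) by simp
    also have "\<dots> \<le> \<epsilon> / (9 * A) * (3 * A * magnitude x)"
      using elim(1) \<open>\<epsilon> > 0\<close> \<open>A > 0\<close> by (intro mult_left_mono) auto
    finally have T2: "\<bar>lin c (g x) - lin c x\<bar> \<le> \<epsilon> / 3 * magnitude x"
      using \<open>A > 0\<close> by simp
    have "(f \<circ> g) x - x - lin (\<lambda>i. c i + d i) x
        = (f (g x) - g x - lin c (g x)) + (lin c (g x) - lin c x) + (g x - x - lin d x)"
      by (simp add: lin_add)
    moreover have "\<epsilon> * magnitude x = \<epsilon> / 3 * magnitude x + \<epsilon> / 3 * magnitude x + \<epsilon> / 3 * magnitude x"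
      by simp
    ultimately show ?case
      using T1 T2 elim(4) by linarith
  qed
qed

lemma expands_inverse:
  assumes f: "expands c f" and lim: "filterlim g F F" and fg: "\<And>x. f (g x) = x"
  shows "expands (\<lambda>i. - c i) g"
  unfolding expands_def
proof (intro allI impI)
  fix \<epsilon> :: real assume "\<epsilon> > 0"
  define A where "A = (\<Sum>i\<in>I. \<bar>c i\<bar>) + 1"
  have "A > 0"
    unfolding A_def by (simp add: add_nonneg_pos sum_nonneg)
  have disp: "\<forall>\<^sub>F x in F. \<bar>g x - x\<bar> \<le> A * (magnitude x + magnitude (g x))"
    using expands_along[OF f lim zero_less_one]
  proof eventually_elim
    case (elim x)
    then have "\<bar>g x - x\<bar> \<le> A * magnitude (g x)"
      using abs_lin_le[of c "g x"] by (simp add: fg A_def distrib_right)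
    also have "\<dots> \<le> A * (magnitude x + magnitude (g x))"
      using \<open>A > 0\<close> by (simp add: magnitude_nonneg)
    finally show ?case .
  qed
  have pos: "\<epsilon> / 4 > 0" "\<epsilon> / (6 * A) > 0"
    using \<open>\<epsilon> > 0\<close> \<open>A > 0\<close> by simp_all
  from magnitude_along[OF lim \<open>A > 0\<close> disp] expands_along[OF f lim pos(1)]
    flat_at_along[OF flat_at_lin[of c] lim pos(2)]
  show "\<forall>\<^sub>F x in F. \<bar>g x - x - lin (\<lambda>i. - c i) x\<bar> \<le> \<epsilon> * magnitude x"
  proof eventually_elim
    case (elim x)
    have "\<bar>x - g x - lin c (g x)\<bar> \<le> \<epsilon> / 4 * magnitude (g x)"
      using elim(2) by (simp add: fg)
    also have "\<dots> \<le> \<epsilon> / 4 * (2 * magnitude x)"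
      using elim(1) \<open>\<epsilon> > 0\<close> by (intro mult_left_mono) auto
    finally have T1: "\<bar>x - g x - lin c (g x)\<bar> \<le> \<epsilon> / 2 * magnitude x"
      by simp
    have "\<bar>lin c (g x) - lin c x\<bar> \<le> \<epsilon> / (6 * A) * \<bar>g x - x\<bar>"
      using elim(3) by simp
    also have "\<dots> \<le> \<epsilon> / (6 * A) * (3 * A * magnitude x)"
      using elim(1) \<open>\<epsilon> > 0\<close> \<open>A > 0\<close> by (intro mult_left_mono) auto
    finally have T2: "\<bar>lin c (g x) - lin c x\<bar> \<le> \<epsilon> / 2 * magnitude x"
      using \<open>A > 0\<close> by simp
    have "g x - x - lin (\<lambda>i. - c i) x = - (x - g x - lin c (g x)) - (lin c (g x) - lin c x)"
      by (simp add: lin_uminus)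
    moreover have "\<epsilon> * magnitude x = \<epsilon> / 2 * magnitude x + \<epsilon> / 2 * magnitude x"
      by simp
    ultimately show ?case
      using T1 T2 by linarith
  qed
qed

end

section \<open>Finitely generated groups acting on the interval\<close>

locale generated_action = group G for G :: "('a, 'b) monoid_scheme" (structure) +
  fixes \<rho> :: "'a \<Rightarrow> real \<Rightarrow> real" and h :: "nat \<Rightarrow> 'a" and n :: nat
  assumes hom: "\<rho> \<in> hom G Diff1_plus_group"
    and generators: "h ` {1..n} \<subseteq> carrier G"
begin

abbreviation H :: "'a set" where
  "H \<equiv> generate G (h ` {1..n})"

lemma rho_carrier: "a \<in> carrier G \<Longrightarrow> \<rho> a \<in> carrier Diff1_plus_group"
  using hom unfolding hom_def by blast

lemma rho_mult: "a \<in> carrier G \<Longrightarrow> b \<in> carrier G \<Longrightarrow> \<rho> (a \<otimes> b) = \<rho> a \<circ> \<rho> b"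
  using hom unfolding hom_def by simp

lemma rho_one: "\<rho> \<one> = id"
proof
  fix x
  have "\<rho> \<one> = \<rho> \<one> \<circ> \<rho> \<one>"
    using rho_mult[OF one_closed one_closed] by simp
  from fun_cong[OF this, of x] have "\<rho> \<one> (\<rho> \<one> x) = \<rho> \<one> x"
    by simp
  then show "\<rho> \<one> x = id x"
    using Diff1_plus_inj[OF rho_carrier[OF one_closed]] by (simp add: inj_eq)
qed

lemma rho_inv_right:
  assumes "a \<in> carrier G"
  shows "\<rho> a (\<rho> (inv a) x) = x"
proof -
  have "id = \<rho> a \<circ> \<rho> (inv a)"
    using rho_mult[OF assms inv_closed[OF assms]] assms by (simp add: rho_one)
  from fun_cong[OF this, of x] show ?thesis
    by simp
qed

lemma rho_inv_left:
  assumes "a \<in> carrier G"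
  shows "\<rho> (inv a) (\<rho> a x) = x"
proof -
  have "id = \<rho> (inv a) \<circ> \<rho> a"
    using rho_mult[OF inv_closed[OF assms] assms] assms by (simp add: rho_one)
  from fun_cong[OF this, of x] show ?thesis
    by simp
qed

lemma rho_maps_interval: "a \<in> carrier G \<Longrightarrow> x \<in> {0..1} \<Longrightarrow> \<rho> a x \<in> {0..1}"
  using Diff1_plus_maps_interval rho_carrier by blast

lemma rho_strict_mono: "a \<in> carrier G \<Longrightarrow> strict_mono_on {0..1} (\<rho> a)"
  using Diff1_plus_strict_mono rho_carrier by blast

lemma generator_carrier: "k \<in> {1..n} \<Longrightarrow> h k \<in> carrier G"
  using generators by blast

lemma subgroup_H: "subgroup H G"
  by (rule generate_is_subgroup[OF generators])

lemma H_carrier: "a \<in> H \<Longrightarrow> a \<in> carrier G"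
  using generate_in_carrier[OF generators] .

lemma generator_in_H: "k \<in> {1..n} \<Longrightarrow> h k \<in> H"
  by (simp add: generate.incl)

lemma subgroup_stabilizer: "subgroup {a \<in> carrier G. \<rho> a x = x} G"
proof (rule subgroupI)
  show "{a \<in> carrier G. \<rho> a x = x} \<noteq> {}"
    using rho_one by force
  show "inv a \<in> {a \<in> carrier G. \<rho> a x = x}" if "a \<in> {a \<in> carrier G. \<rho> a x = x}" for a
    using that rho_inv_left[of a x] by auto
qed (auto simp: rho_mult)

lemma fixset_generateI:
  assumes "x \<in> {0..1}" "\<And>k. k \<in> {1..n} \<Longrightarrow> \<rho> (h k) x = x"
  shows "x \<in> fixset \<rho> H"
proof -
  have "H \<subseteq> {a \<in> carrier G. \<rho> a x = x}"
    using assms(2) generators by (intro generate_subgroup_incl subgroup_stabilizer) auto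
  with assms(1) show ?thesis
    unfolding fixset_def by blast
qed

lemma closed_fixset:
  assumes A: "A \<subseteq> carrier G"
  shows "closed (fixset \<rho> A)"
proof -
  have "fixset \<rho> A = {0..1} \<inter> (\<Inter>a\<in>A. {x \<in> {0..1}. \<rho> a x - x = 0})"
    unfolding fixset_def by auto
  moreover have "closed {x \<in> {0..1}. \<rho> a x - x = 0}" if "a \<in> A" for a
    using that A Diff1_plus_C1[OF rho_carrier] C1_on_continuous_on
    by (intro continuous_closed_preimage_constant continuous_intros) auto
  ultimately show ?thesis
    by (simp add: closed_INT closed_Int)
qed

definition disp :: "nat \<Rightarrow> real \<Rightarrow> real" where
  "disp k x = \<rho> (h k) x - x"

definition max_disp :: "real \<Rightarrow> real" where
  "max_disp x = Max ((\<lambda>(k, e). \<rho> (h k [^] e) x - x) ` ({1..n} \<times> {1, -1 :: int}))"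

lemma max_disp_ge:
  assumes "k \<in> {1..n}" "(e :: int) \<in> {1, -1}"
  shows "\<rho> (h k [^] e) x - x \<le> max_disp x"
proof -
  let ?D = "\<lambda>(k, e :: int). \<rho> (h k [^] e) x - x"
  have "?D (k, e) \<in> ?D ` ({1..n} \<times> {1, -1})"
    by (rule imageI) (use assms in simp)
  then have "?D (k, e) \<le> Max (?D ` ({1..n} \<times> {1, -1}))"
    by (intro Max_ge) auto
  then show ?thesis
    by (simp add: max_disp_def)
qed

lemma disp_le_max_disp: "k \<in> {1..n} \<Longrightarrow> disp k x \<le> max_disp x"
  using max_disp_ge[of k 1 x] generator_carrier by (simp add: disp_def)

lemma inv_disp_le_max_disp: "k \<in> {1..n} \<Longrightarrow> \<rho> (inv (h k)) x - x \<le> max_disp x"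
  using max_disp_ge[of k "-1" x] generator_carrier by (simp add: int_pow_neg)

lemma max_disp_attained:
  assumes "x \<in> {0..1}" "x \<notin> fixset \<rho> H"
  shows "\<exists>k\<in>{1..n}. \<exists>e\<in>{1, -1 :: int}. \<rho> (h k [^] e) x - x = max_disp x"
proof -
  obtain k where "k \<in> {1..n}"
    using fixset_generateI assms by blast
  then have "max_disp x \<in> (\<lambda>(k, e :: int). \<rho> (h k [^] e) x - x) ` ({1..n} \<times> {1, -1})"
    unfolding max_disp_def by (intro Max_in) auto
  then obtain ke where "ke \<in> {1..n} \<times> {1, -1}" "max_disp x = (\<lambda>(k, e :: int). \<rho> (h k [^] e) x - x) ke"
    by (rule imageE)
  then show ?thesis
    by (cases ke) auto
qed

lemma max_disp_choice:
  assumes "\<And>m. q m \<in> {0..1} - fixset \<rho> H"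
  obtains k and e :: "nat \<Rightarrow> int" where "\<And>m. k m \<in> {1..n}" "\<And>m. e m \<in> {1, -1}"
    "\<And>m. max_disp (q m) = \<rho> (h (k m) [^] e m) (q m) - q m"
proof -
  have "\<forall>m. \<exists>k. k \<in> {1..n} \<and> (\<exists>e. e \<in> {1, -1 :: int} \<and> \<rho> (h k [^] e) (q m) - q m = max_disp (q m))"
    using max_disp_attained assms by blast
  from choice[OF this] obtain k where k:
    "\<forall>m. k m \<in> {1..n} \<and> (\<exists>e. e \<in> {1, -1 :: int} \<and> \<rho> (h (k m) [^] e) (q m) - q m = max_disp (q m))"
    by blast
  then have "\<forall>m. \<exists>e. e \<in> {1, -1 :: int} \<and> \<rho> (h (k m) [^] e) (q m) - q m = max_disp (q m)"
    by blast
  from choice[OF this] obtain e where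
    e: "\<forall>m. e m \<in> {1, -1 :: int} \<and> \<rho> (h (k m) [^] e m) (q m) - q m = max_disp (q m)"
    by blast
  show ?thesis
    by (rule that[of k e]) (use k e in auto)
qed

lemma inv_moves_right:
  assumes "k \<in> {1..n}" "x \<in> {0..1}" "\<rho> (h k) x < x"
  shows "x < \<rho> (inv (h k)) x"
proof (rule ccontr)
  let ?y = "\<rho> (inv (h k)) x"
  assume "\<not> x < ?y"
  moreover have "?y \<in> {0..1}"
    using assms generator_carrier by (intro rho_maps_interval) auto
  ultimately have "\<rho> (h k) ?y \<le> \<rho> (h k) x"
    using strict_mono_onD[OF rho_strict_mono[OF generator_carrier[OF assms(1)]] _ assms(2), of ?y]
    by (cases "?y = x") auto
  then show False
    using assms(3) rho_inv_right[OF generator_carrier[OF assms(1)]] by simp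
qed

lemma max_disp_pos:
  assumes "x \<in> {0..1}" "x \<notin> fixset \<rho> H"
  shows "0 < max_disp x"
proof -
  obtain k where k: "k \<in> {1..n}" "\<rho> (h k) x \<noteq> x"
    using fixset_generateI assms by blast
  show ?thesis
  proof (cases "\<rho> (h k) x < x")
    case True
    then show ?thesis
      using inv_moves_right[OF k(1) assms(1)] inv_disp_le_max_disp[OF k(1), of x] by linarith
  next
    case False
    then show ?thesis
      using k disp_le_max_disp[OF k(1), of x] by (simp add: disp_def)
  qed
qed

text \<open>When a generator pushes \<open>x\<close> to the left, its inverse pushes \<open>x\<close> to the right by an
  amount comparable through the Lipschitz constant of the generator.\<close>

lemma abs_disp_le_max_disp:
  obtains K where "K > 0" "\<And>k x. k \<in> {1..n} \<Longrightarrow> x \<in> {0..1} \<Longrightarrow> \<bar>disp k x\<bar> \<le> K * max_disp x"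
proof -
  have "\<forall>k\<in>{1..n}. \<exists>L. \<forall>x\<in>{0..1}. \<forall>y\<in>{0..1}. \<bar>\<rho> (h k) x - \<rho> (h k) y\<bar> \<le> L * \<bar>x - y\<bar>"
  proof
    fix k assume "k \<in> {1..n}"
    obtain L where "\<And>x y. x \<in> {0..1} \<Longrightarrow> y \<in> {0..1} \<Longrightarrow> \<bar>\<rho> (h k) x - \<rho> (h k) y\<bar> \<le> L * \<bar>x - y\<bar>"
      by (rule C1_on_lipschitz[OF Diff1_plus_C1[OF rho_carrier[OF generator_carrier[OF \<open>k \<in> {1..n}\<close>]]]])
        (blast | simp)+
    then show "\<exists>L. \<forall>x\<in>{0..1}. \<forall>y\<in>{0..1}. \<bar>\<rho> (h k) x - \<rho> (h k) y\<bar> \<le> L * \<bar>x - y\<bar>"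
      by blast
  qed
  from bchoice[OF this] obtain L where L: "\<forall>k\<in>{1..n}. \<forall>x\<in>{0..1}. \<forall>y\<in>{0..1}.
      \<bar>\<rho> (h k) x - \<rho> (h k) y\<bar> \<le> L k * \<bar>x - y\<bar>"
    by blast
  define K where "K = 1 + (\<Sum>k\<in>{1..n}. \<bar>L k\<bar>)"
  have "K \<ge> 1"
    unfolding K_def by (simp add: sum_nonneg)
  have L_le_K: "L k \<le> K" if "k \<in> {1..n}" for k
    using member_le_sum[of k "{1..n}" "\<lambda>k. \<bar>L k\<bar>"] that unfolding K_def by auto
  have bound: "\<bar>disp k x\<bar> \<le> K * max_disp x" if k: "k \<in> {1..n}" and x: "x \<in> {0..1}" for k x
  proof (cases "disp k x \<ge> 0")
    case True
    then have "\<bar>disp k x\<bar> \<le> 1 * max_disp x"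
      using disp_le_max_disp[OF k, of x] by simp
    also have "\<dots> \<le> K * max_disp x"
      using True disp_le_max_disp[OF k, of x] \<open>K \<ge> 1\<close> by (intro mult_right_mono) auto
    finally show ?thesis .
  next
    case False
    define y where "y = \<rho> (inv (h k)) x"
    have "y \<in> {0..1}"
      unfolding y_def using k x generator_carrier by (intro rho_maps_interval) auto
    have "x < y"
      unfolding y_def using inv_moves_right[OF k x] False by (simp add: disp_def)
    have "\<bar>disp k x\<bar> = \<rho> (h k) y - \<rho> (h k) x"
      using False rho_inv_right[OF generator_carrier[OF k]] by (simp add: disp_def y_def)
    also have "\<dots> \<le> L k * \<bar>y - x\<bar>"
      using L k \<open>y \<in> {0..1}\<close> x by (meson abs_ge_self order_trans)
    also have "\<dots> = L k * (y - x)"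
      using \<open>x < y\<close> by simp
    also have "\<dots> \<le> K * (y - x)"
      using L_le_K[OF k] \<open>x < y\<close> by (simp add: mult_right_mono)
    also have "\<dots> \<le> K * max_disp x"
      using inv_disp_le_max_disp[OF k, of x] \<open>K \<ge> 1\<close> by (simp add: y_def)
    finally show ?thesis .
  qed
  show ?thesis
    by (rule that[of K]) (use \<open>K \<ge> 1\<close> bound in auto)
qed

end

locale generated_action_fixing = generated_action +
  fixes p :: real
  assumes p_fixed: "p \<in> fixset \<rho> H"
begin

abbreviation at_p :: "real filter" where
  "at_p \<equiv> at p within {0..1}"

lemma p_in_interval: "p \<in> {0..1}"
  using p_fixed unfolding fixset_def by blast

lemma H_fixes_p: "a \<in> H \<Longrightarrow> \<rho> a p = p"
  using p_fixed unfolding fixset_def by blast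

lemma eventually_at_p: "\<forall>\<^sub>F x in at_p. x \<in> {0..1} \<and> x \<noteq> p"
  by (auto simp: eventually_at_filter)

lemma at_p_nontrivial: "at_p \<noteq> bot"
  using p_in_interval islimpt_Icc[of 0 1 p] by (simp add: trivial_limit_within)

lemma rho_tendsto_at_p:
  assumes "a \<in> H"
  shows "filterlim (\<rho> a) at_p at_p"
proof (rule filterlim_at_withinI)
  have a: "a \<in> carrier G"
    using assms by (rule H_carrier)
  have "continuous_on {0..1} (\<rho> a)"
    using C1_on_continuous_on[OF Diff1_plus_C1[OF rho_carrier[OF a]]] .
  then have "(\<rho> a \<longlongrightarrow> \<rho> a p) at_p"
    using p_in_interval unfolding continuous_on_def by blast
  then show "filterlim (\<rho> a) (nhds p) at_p"
    using H_fixes_p[OF assms] by simp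
  show "\<forall>\<^sub>F x in at_p. \<rho> a x \<in> {0..1} - {p}"
    using eventually_at_p
  proof eventually_elim
    case (elim x)
    then have "\<rho> a x \<noteq> \<rho> a p"
      using Diff1_plus_inj[OF rho_carrier[OF a]] by (auto simp: inj_eq)
    with elim show ?case
      using H_fixes_p[OF assms] rho_maps_interval[OF a] by simp
  qed
qed

lemma rho_has_derivative_at_p: "a \<in> carrier G \<Longrightarrow> \<exists>d. (\<rho> a has_real_derivative d) at_p"
  using Diff1_plus_C1[OF rho_carrier] p_in_interval unfolding C1_on_def by blast

lemma rho_mult_derivative:
  assumes a: "a \<in> carrier G" and b: "b \<in> H"
    and "(\<rho> a has_real_derivative da) at_p" "(\<rho> b has_real_derivative db) at_p"
  shows "(\<rho> (a \<otimes> b) has_real_derivative da * db) at_p"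
proof -
  have "\<rho> b ` {0..1} \<subseteq> {0..1}"
    using rho_maps_interval[OF H_carrier[OF b]] by blast
  from DERIV_subset[OF assms(3) this]
  have "(\<rho> a has_real_derivative da) (at (\<rho> b p) within \<rho> b ` {0..1})"
    using H_fixes_p[OF b] by simp
  from DERIV_image_chain[OF this assms(4)] show ?thesis
    using rho_mult[OF a H_carrier[OF b]] by simp
qed

lemma rho_inv_derivative:
  assumes a: "a \<in> H" and da: "(\<rho> a has_real_derivative da) at_p"
  obtains da' where "(\<rho> (inv a) has_real_derivative da') at_p" "da' * da = 1"
proof -
  have "inv a \<in> carrier G"
    using H_carrier[OF a] by simp
  then obtain da' where da': "(\<rho> (inv a) has_real_derivative da') at_p"
    using rho_has_derivative_at_p by blast
  have "(\<rho> (inv a \<otimes> a) has_real_derivative da' * da) at_p"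
    using rho_mult_derivative[OF \<open>inv a \<in> carrier G\<close> a da' da] .
  then have "(id has_real_derivative da' * da) at_p"
    using H_carrier[OF a] by (simp add: rho_one)
  moreover have "(id has_real_derivative 1) at_p"
    unfolding id_def by (rule DERIV_ident)
  ultimately have "da' * da = 1"
    by (rule has_field_derivative_unique[OF _ _ at_p_nontrivial])
  with da' that show ?thesis
    by blast
qed

lemma subgroup_tangent: "subgroup {a \<in> H. (\<rho> a has_real_derivative 1) at_p} G"
proof (rule subgroupI)
  show "{a \<in> H. (\<rho> a has_real_derivative 1) at_p} \<noteq> {}"
    using subgroup.one_closed[OF subgroup_H] rho_one by (auto intro: DERIV_ident simp: id_def)
  show "inv a \<in> {a \<in> H. (\<rho> a has_real_derivative 1) at_p}"
    if "a \<in> {a \<in> H. (\<rho> a has_real_derivative 1) at_p}" for a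
  proof -
    have "a \<in> H" "(\<rho> a has_real_derivative 1) at_p"
      using that by auto
    moreover obtain d' where "(\<rho> (inv a) has_real_derivative d') at_p" "d' * 1 = 1"
      using rho_inv_derivative[OF calculation] by blast
    ultimately show ?thesis
      using subgroup.m_inv_closed[OF subgroup_H] by auto
  qed
  show "a \<otimes> b \<in> {a \<in> H. (\<rho> a has_real_derivative 1) at_p}"
    if "a \<in> {a \<in> H. (\<rho> a has_real_derivative 1) at_p}" "b \<in> {a \<in> H. (\<rho> a has_real_derivative 1) at_p}"
    for a b
    using that rho_mult_derivative[of a b 1 1] subgroup.m_closed[OF subgroup_H] H_carrier by auto
qed (use H_carrier in auto)

lemma commutator_tangent:
  assumes a: "a \<in> H" and b: "b \<in> H"
  shows "(\<rho> (a \<otimes> b \<otimes> inv a \<otimes> inv b) has_real_derivative 1) at_p"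
proof -
  obtain da db where da: "(\<rho> a has_real_derivative da) at_p" and db: "(\<rho> b has_real_derivative db) at_p"
    using rho_has_derivative_at_p H_carrier a b by blast
  obtain da' where da': "(\<rho> (inv a) has_real_derivative da') at_p" "da' * da = 1"
    using rho_inv_derivative[OF a da] by blast
  obtain db' where db': "(\<rho> (inv b) has_real_derivative db') at_p" "db' * db = 1"
    using rho_inv_derivative[OF b db] by blast
  have inv_H: "inv a \<in> H" "inv b \<in> H"
    using subgroup.m_inv_closed[OF subgroup_H] a b by auto
  have ab: "a \<otimes> b \<in> carrier G" and aba: "a \<otimes> b \<otimes> inv a \<in> carrier G"
    using a b inv_H H_carrier by auto
  have "(\<rho> (a \<otimes> b) has_real_derivative da * db) at_p"
    by (rule rho_mult_derivative[OF H_carrier[OF a] b da db])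
  then have "(\<rho> (a \<otimes> b \<otimes> inv a) has_real_derivative da * db * da') at_p"
    by (rule rho_mult_derivative[OF ab inv_H(1) _ da'(1)])
  then have "(\<rho> (a \<otimes> b \<otimes> inv a \<otimes> inv b) has_real_derivative da * db * da' * db') at_p"
    by (rule rho_mult_derivative[OF aba inv_H(2) _ db'(1)])
  moreover have "da * db * da' * db' = (da' * da) * (db' * db)"
    by (simp only: ac_simps)
  ultimately show ?thesis
    using da'(2) db'(2) by (simp only: mult_1)
qed

lemma derived_tangent: "g \<in> derived G H \<Longrightarrow> (\<rho> g has_real_derivative 1) at_p"
proof -
  assume "g \<in> derived G H"
  moreover have "derived_set G H \<subseteq> {a \<in> H. (\<rho> a has_real_derivative 1) at_p}"
    using commutator_tangent derived_set_incl[OF subset_refl subgroup_H] by blast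
  then have "derived G H \<subseteq> {a \<in> H. (\<rho> a has_real_derivative 1) at_p}"
    unfolding derived_def by (rule generate_subgroup_incl[OF _ subgroup_tangent])
  ultimately show ?thesis
    by blast
qed

lemma derived_in_H: "g \<in> derived G H \<Longrightarrow> g \<in> H"
  using derived_incl[OF subset_refl subgroup_H] by blast

lemma derived_displacement_lt_max_disp_if_not_tangent:
  assumes k: "k \<in> {1..n}" and d: "(\<rho> (h k) has_real_derivative d) at_p" "d \<noteq> 1"
    and g: "g \<in> derived G H"
  shows "\<forall>\<^sub>F x in at_p. x \<notin> fixset \<rho> H \<longrightarrow> \<bar>\<rho> g x - x\<bar> < max_disp x"
proof -
  obtain K where "K > 0" and K: "\<And>k x. k \<in> {1..n} \<Longrightarrow> x \<in> {0..1} \<Longrightarrow> \<bar>disp k x\<bar> \<le> K * max_disp x"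
    by (rule abs_disp_le_max_disp) blast
  have g_quot: "((\<lambda>x. (\<rho> g x - x) / (x - p)) \<longlongrightarrow> 0) at_p"
    using fixed_point_displacement_quotient[OF derived_tangent[OF g] H_fixes_p[OF derived_in_H[OF g]]]
    by simp
  have k_quot: "((\<lambda>x. disp k x / (x - p)) \<longlongrightarrow> d - 1) at_p"
    using fixed_point_displacement_quotient[OF d(1) H_fixes_p[OF generator_in_H[OF k]]]
    unfolding disp_def .
  have quot_lim: "((\<lambda>x. (\<rho> g x - x) / (x - p) / (disp k x / (x - p))) \<longlongrightarrow> 0) at_p"
    using tendsto_divide[OF g_quot k_quot] d(2) by simp
  have quot_eq: "\<forall>\<^sub>F x in at_p. (\<rho> g x - x) / (x - p) / (disp k x / (x - p)) = (\<rho> g x - x) / disp k x"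
    using eventually_at_p
  proof eventually_elim
    case (elim x)
    then show ?case
      by (cases "disp k x = 0") (simp_all add: field_simps)
  qed
  have "((\<lambda>x. (\<rho> g x - x) / disp k x) \<longlongrightarrow> 0) at_p"
    using tendsto_cong[OF quot_eq] quot_lim by blast
  moreover have "1 / (2 * K) > 0"
    using \<open>K > 0\<close> by simp
  ultimately have small: "\<forall>\<^sub>F x in at_p. \<bar>(\<rho> g x - x) / disp k x\<bar> < 1 / (2 * K)"
    using tendstoD by (fastforce simp: dist_real_def)
  have "\<forall>\<^sub>F x in at_p. disp k x / (x - p) \<noteq> 0"
    using tendsto_imp_eventually_ne[OF k_quot, of 0] d(2) by simp
  then have nonzero: "\<forall>\<^sub>F x in at_p. disp k x \<noteq> 0"
    by (rule eventually_mono) simp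
  from small nonzero eventually_at_p
  show ?thesis
  proof eventually_elim
    case (elim x)
    show ?case
    proof
      assume "x \<notin> fixset \<rho> H"
      then have "max_disp x > 0"
        using max_disp_pos elim(3) by blast
      have "\<bar>\<rho> g x - x\<bar> = \<bar>(\<rho> g x - x) / disp k x\<bar> * \<bar>disp k x\<bar>"
        using elim(2) by simp
      also have "\<dots> \<le> 1 / (2 * K) * (K * max_disp x)"
        using elim K[OF k] \<open>K > 0\<close> by (intro mult_mono) auto
      also have "\<dots> = max_disp x / 2"
        using \<open>K > 0\<close> by simp
      finally show "\<bar>\<rho> g x - x\<bar> < max_disp x"
        using \<open>max_disp x > 0\<close> by linarith
    qed
  qed
qed

end

locale tangent_generated_action = generated_action_fixing +
  assumes generators_tangent: "\<And>k. k \<in> {1..n} \<Longrightarrow> (\<rho> (h k) has_real_derivative 1) (at p within {0..1})"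

sublocale tangent_generated_action \<subseteq> flat_family "at p within {0..1}" "{1..n}" disp
proof
  fix k assume k: "k \<in> {1..n}"
  obtain f' where f': "continuous_on {0..1} f'"
    "\<And>x. x \<in> {0..1} \<Longrightarrow> (\<rho> (h k) has_real_derivative f' x) (at x within {0..1})"
    using Diff1_plus_C1[OF rho_carrier[OF generator_carrier[OF k]]] unfolding C1_on_def by blast
  have "f' p = 1"
    using has_field_derivative_unique[OF f'(2)[OF p_in_interval] generators_tangent[OF k] at_p_nontrivial] .
  have "(disp k has_real_derivative f' x - 1) (at x within {0..1})" if "x \<in> {0..1}" for x
    unfolding disp_def[abs_def] using f'(2)[OF that] by (intro derivative_intros) auto
  then show "flat_at at_p (disp k)"
    using f'(1) \<open>f' p = 1\<close> p_in_interval
    by (intro flat_at_if_derivative_vanishes[where \<phi>' = "\<lambda>x. f' x - 1"] continuous_intros) auto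
qed simp

context tangent_generated_action
begin

lemma subgroup_expanding:
  assumes "(\<lambda>_. 0) \<in> C" "\<And>c d. c \<in> C \<Longrightarrow> d \<in> C \<Longrightarrow> (\<lambda>i. c i + d i) \<in> C"
    and "\<And>c. c \<in> C \<Longrightarrow> (\<lambda>i. - c i) \<in> C"
  shows "subgroup {a \<in> H. \<exists>c\<in>C. expands c (\<rho> a)} G"
proof (rule subgroupI)
  have "\<one> \<in> {a \<in> H. \<exists>c\<in>C. expands c (\<rho> a)}"
    using subgroup.one_closed[OF subgroup_H] assms(1) expands_id by (auto simp: rho_one)
  then show "{a \<in> H. \<exists>c\<in>C. expands c (\<rho> a)} \<noteq> {}"
    by blast
  show "inv a \<in> {a \<in> H. \<exists>c\<in>C. expands c (\<rho> a)}" if a: "a \<in> {a \<in> H. \<exists>c\<in>C. expands c (\<rho> a)}" for a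
  proof -
    obtain c where "a \<in> H" "c \<in> C" "expands c (\<rho> a)"
      using a by blast
    moreover have "inv a \<in> H"
      using subgroup.m_inv_closed[OF subgroup_H \<open>a \<in> H\<close>] .
    ultimately show ?thesis
      using expands_inverse[OF _ rho_tendsto_at_p rho_inv_right[OF H_carrier]] assms(3) by blast
  qed
  show "a \<otimes> b \<in> {a \<in> H. \<exists>c\<in>C. expands c (\<rho> a)}"
    if ab: "a \<in> {a \<in> H. \<exists>c\<in>C. expands c (\<rho> a)}" "b \<in> {a \<in> H. \<exists>c\<in>C. expands c (\<rho> a)}" for a b
  proof -
    obtain c d where "a \<in> H" "b \<in> H" "c \<in> C" "d \<in> C" "expands c (\<rho> a)" "expands d (\<rho> b)"
      using ab by blast
    then have "expands (\<lambda>i. c i + d i) (\<rho> (a \<otimes> b))"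
      using expands_comp[OF _ _ rho_tendsto_at_p] rho_mult[OF H_carrier H_carrier] by simp
    with \<open>a \<in> H\<close> \<open>b \<in> H\<close> \<open>c \<in> C\<close> \<open>d \<in> C\<close> show ?thesis
      using subgroup.m_closed[OF subgroup_H] assms(2) by blast
  qed
qed (use H_carrier in auto)

lemma H_expands:
  assumes "a \<in> H"
  shows "\<exists>c. expands c (\<rho> a)"
proof -
  have "h ` {1..n} \<subseteq> {a \<in> H. \<exists>c\<in>UNIV. expands c (\<rho> a)}"
    using expands_basis[of _ "\<rho> (h _)"] generator_in_H by (fastforce simp: disp_def)
  then have "H \<subseteq> {a \<in> H. \<exists>c\<in>UNIV. expands c (\<rho> a)}"
    by (rule generate_subgroup_incl[OF _ subgroup_expanding]) auto
  with assms show ?thesis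
    by blast
qed

lemma commutator_expands:
  assumes a: "a \<in> H" and b: "b \<in> H"
  shows "expands (\<lambda>_. 0) (\<rho> (a \<otimes> b \<otimes> inv a \<otimes> inv b))"
proof -
  obtain c d where c: "expands c (\<rho> a)" and d: "expands d (\<rho> b)"
    using H_expands a b by blast
  have inv_H: "inv a \<in> H" "inv b \<in> H"
    using subgroup.m_inv_closed[OF subgroup_H] a b by auto
  have c': "expands (\<lambda>i. - c i) (\<rho> (inv a))" and d': "expands (\<lambda>i. - d i) (\<rho> (inv b))"
    using expands_inverse[OF c rho_tendsto_at_p[OF inv_H(1)] rho_inv_right[OF H_carrier[OF a]]]
      expands_inverse[OF d rho_tendsto_at_p[OF inv_H(2)] rho_inv_right[OF H_carrier[OF b]]] .
  have "expands (\<lambda>i. c i + d i + - c i + - d i) (\<rho> a \<circ> \<rho> b \<circ> \<rho> (inv a) \<circ> \<rho> (inv b))"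
    using rho_tendsto_at_p b inv_H
    by (intro expands_comp[OF expands_comp[OF expands_comp[OF c d] c'] d'])
  moreover have "\<rho> (a \<otimes> b \<otimes> inv a \<otimes> inv b) = \<rho> a \<circ> \<rho> b \<circ> \<rho> (inv a) \<circ> \<rho> (inv b)"
    using a b inv_H H_carrier by (simp add: rho_mult)
  ultimately show ?thesis
    by simp
qed

lemma derived_expands: "g \<in> derived G H \<Longrightarrow> expands (\<lambda>_. 0) (\<rho> g)"
proof -
  assume "g \<in> derived G H"
  moreover have "derived_set G H \<subseteq> {a \<in> H. \<exists>c\<in>{\<lambda>_. 0}. expands c (\<rho> a)}"
    using commutator_expands derived_set_incl[OF subset_refl subgroup_H] by blast
  then have "derived G H \<subseteq> {a \<in> H. \<exists>c\<in>{\<lambda>_. 0}. expands c (\<rho> a)}"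
    unfolding derived_def by (rule generate_subgroup_incl[OF _ subgroup_expanding]) auto
  ultimately show ?thesis
    by blast
qed

lemma magnitude_le_max_disp:
  obtains K where "K > 0"
    "\<And>x. x \<in> {0..1} \<Longrightarrow> x \<notin> fixset \<rho> H \<Longrightarrow> magnitude x \<le> K * max_disp x"
proof -
  obtain K where "K > 0" and K: "\<And>k x. k \<in> {1..n} \<Longrightarrow> x \<in> {0..1} \<Longrightarrow> \<bar>disp k x\<bar> \<le> K * max_disp x"
    by (rule abs_disp_le_max_disp) blast
  have "magnitude x \<le> (real n * K + 1) * max_disp x" if "x \<in> {0..1}" "x \<notin> fixset \<rho> H" for x
  proof -
    have "magnitude x \<le> real (card {1..n}) * (K * max_disp x)"
      unfolding magnitude_def by (rule sum_bounded_above) (use K that(1) in blast)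
    also have "\<dots> \<le> (real n * K + 1) * max_disp x"
      using max_disp_pos[OF that] by (simp add: distrib_right mult.assoc)
    finally show ?thesis .
  qed
  moreover have "real n * K + 1 > 0"
    using \<open>K > 0\<close> by (simp add: add_nonneg_pos)
  ultimately show ?thesis
    using that by blast
qed

lemma derived_displacement_lt_max_disp_tangent:
  assumes "g \<in> derived G H"
  shows "\<forall>\<^sub>F x in at_p. x \<notin> fixset \<rho> H \<longrightarrow> \<bar>\<rho> g x - x\<bar> < max_disp x"
proof -
  obtain K where "K > 0"
    and K: "\<And>x. x \<in> {0..1} \<Longrightarrow> x \<notin> fixset \<rho> H \<Longrightarrow> magnitude x \<le> K * max_disp x"
    by (rule magnitude_le_max_disp) blast
  have "1 / (2 * K) > 0"
    using \<open>K > 0\<close> by simp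
  from expandsD[OF derived_expands[OF assms] this] eventually_at_p
  show ?thesis
  proof eventually_elim
    case (elim x)
    show ?case
    proof
      assume "x \<notin> fixset \<rho> H"
      have "\<bar>\<rho> g x - x\<bar> \<le> 1 / (2 * K) * magnitude x"
        using elim(1) unfolding lin_zero by simp
      also have "\<dots> \<le> 1 / (2 * K) * (K * max_disp x)"
        using K elim(2) \<open>x \<notin> fixset \<rho> H\<close> \<open>K > 0\<close> by (intro mult_left_mono) auto
      also have "\<dots> = max_disp x / 2"
        using \<open>K > 0\<close> by simp
      finally show "\<bar>\<rho> g x - x\<bar> < max_disp x"
        using max_disp_pos elim(2) \<open>x \<notin> fixset \<rho> H\<close> by fastforce
    qed
  qed
qed

end

context generated_action_fixing
begin

lemma derived_displacement_lt_max_disp: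
  assumes "g \<in> derived G H"
  shows "\<forall>\<^sub>F x in at_p. x \<notin> fixset \<rho> H \<longrightarrow> \<bar>\<rho> g x - x\<bar> < max_disp x"
proof (cases "\<forall>k\<in>{1..n}. (\<rho> (h k) has_real_derivative 1) at_p")
  case True
  interpret tangent_generated_action G \<rho> h n p
    using True by unfold_locales blast
  show ?thesis
    using derived_displacement_lt_max_disp_tangent[OF assms] .
next
  case False
  then obtain k d where "k \<in> {1..n}" "(\<rho> (h k) has_real_derivative d) at_p" "d \<noteq> 1"
    using rho_has_derivative_at_p[OF generator_carrier] by blast
  then show ?thesis
    using derived_displacement_lt_max_disp_if_not_tangent[OF _ _ _ assms] by blast
qed

lemma derived_displacement_lt_max_disp_sequentially:
  assumes "\<And>m. q m \<in> {0..1} - fixset \<rho> H" "q \<longlonglongrightarrow> p" "g \<in> derived G H"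
  shows "\<forall>\<^sub>F m in sequentially. \<rho> g (q m) - q m < max_disp (q m)"
proof -
  have "q m \<in> {0..1} - {p}" for m
    using assms(1)[of m] p_fixed by auto
  then have "filterlim q at_p sequentially"
    using assms(2) by (intro filterlim_at_withinI always_eventually) auto
  then have "\<forall>\<^sub>F m in sequentially. q m \<notin> fixset \<rho> H \<longrightarrow> \<bar>\<rho> g (q m) - q m\<bar> < max_disp (q m)"
    using derived_displacement_lt_max_disp[OF assms(3)] unfolding filterlim_iff by blast
  then show ?thesis
    by (rule eventually_mono) (use assms(1) in \<open>auto simp: abs_less_iff\<close>)
qed

end

theorem lemma2p7:
  fixes G :: "('a, 'b) monoid_scheme"
    and \<rho> :: "'a \<Rightarrow> real \<Rightarrow> real"
    and h :: "nat \<Rightarrow> 'a" and n :: nat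
    and p :: real and ps :: "nat \<Rightarrow> real"
  assumes "group G"
    and "\<rho> \<in> hom G Diff1_plus_group"
    and "inj_on \<rho> (carrier G)"
    and "h ` {1..n} \<subseteq> carrier G"
    and "p \<in> frontier (fixset \<rho> (generate G (h ` {1..n})))"
    and "\<And>m. ps m \<in> {0..1} - fixset \<rho> (generate G (h ` {1..n}))"
    and "ps \<longlonglongrightarrow> p"
  shows "\<exists>k :: nat \<Rightarrow> nat. \<exists>e :: nat \<Rightarrow> int.
           (\<forall>m. k m \<in> {1..n} \<and> e m \<in> {1, -1}) \<and>
           (\<forall>g \<in> derived G (generate G (h ` {1..n})).
              \<exists>M. \<forall>m\<ge>M. \<rho> g (ps m) < \<rho> (h (k m) [^]\<^bsub>G\<^esub> e m) (ps m))"
proof -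
  interpret generated_action G \<rho> h n
    using assms(1,2,4) by (simp add: generated_action_def generated_action_axioms_def)
  have "closed (fixset \<rho> H)"
    using closed_fixset H_carrier by blast
  then have "p \<in> fixset \<rho> H"
    using assms(5) frontier_subset_closed by blast
  then interpret generated_action_fixing G \<rho> h n p
    by unfold_locales
  obtain k and e :: "nat \<Rightarrow> int" where ke: "\<And>m. k m \<in> {1..n}" "\<And>m. e m \<in> {1, -1}"
    "\<And>m. max_disp (ps m) = \<rho> (h (k m) [^]\<^bsub>G\<^esub> e m) (ps m) - ps m"
    by (rule max_disp_choice[of ps, OF assms(6)]) blast
  have "\<exists>M. \<forall>m\<ge>M. \<rho> g (ps m) < \<rho> (h (k m) [^]\<^bsub>G\<^esub> e m) (ps m)" if "g \<in> derived G H" for g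
    using derived_displacement_lt_max_disp_sequentially[OF assms(6,7) that]
    unfolding eventually_sequentially ke(3) by simp
  with ke(1,2) show ?thesis
    by blast
qed

end
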